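(* Let $0<\delta<1/3$, $d_s\ge\delta/2$, $d_x\ge0$. Define $\mathcal D_1=\{0\le d_x\le2\delta,\ d_s\ge d_x/2+\delta/2\}$; $\mathcal D_2=\{2\delta\le d_x\le1/2+\delta/2,\ d_s\ge d_x-\delta/2\}$; $\mathcal D_3=\{d_x\ge d_s+\delta/2,\ \delta/2\le d_s\le1/2\}$; $\mathcal D_4=\{2d_s-\delta\le d_x\le d_s+\delta/2,\ \delta/2\le d_s\le3\delta/2\}$; $\mathcal D_5=\{d_x\ge1/2+\delta/2,\ d_s\ge1/2\}$. Then, with $x,y\in\{0,1,e\}$, $z\in\{0,1\}$: (i) if $(d_s,d_x)\in\mathcal D_1$, $R(d_s,d_x)=h(\delta)+(1-\delta)\log2-h(d_x)-d_x\log2$, attained by $X-Y^\star-Z^\star$ Markov with $P_{Y^\star}(0)=P_{Y^\star}(1)=\frac{1-\delta-d_x}{2-3d_x}$, $P_{Y^\star}(e)=\frac{2\delta-d_x}{2-3d_x}$, $P_{X|Y^\star}(x|y)=1-d_x$ if $x=y$ and $d_x/2$ otherwise, $P_{Z^\star|Y^\star}(z|y)=1$ if $z=y$, $P_{Z^\star|Y^\star}(0|e)=\theta$, $P_{Z^\star|Y^\star}(1|e)=1-\theta$, and $0$ otherwise, for any $\theta\in[0,1]$; (ii) if $(d_s,d_x)\in\mathcal D_2$, $R(d_s,d_x)=(1-\delta)[\log2-h((d_x-\delta)/(1-\delta))]$, attained by $X-Y^\star-Z^\star$ with $P_{Y^\star}(0)=P_{Y^\star}(1)=1/2$, $P_{Y^\star}(e)=0$,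 $P_{X|Y^\star}(x|y)=1-d_x$ if $x=y\ne e$, $d_x-\delta$ if $x\ne y$ with $x,y\ne e$, $\delta$ if $x=e,y\ne e$, and $Z^\star=Y^\star$; (iii) if $(d_s,d_x)\in\mathcal D_3$, $R(d_s,d_x)=(1-\delta)[\log2-h((d_s-\delta/2)/(1-\delta))]$, attained by $X-Z^\star-Y^\star$ with $P_{Z^\star}$ uniform on $\{0,1\}$, $P_{X|Z^\star}(x|z)=1-d_s-\delta/2$ if $x=z$, $d_s-\delta/2$ if $x\ne z,x\ne e$, $\delta$ if $x=e$, and $Y^\star=Z^\star$; (iv) if $(d_s,d_x)\in\mathcal D_4$, $R(d_s,d_x)=h(\delta)+(1-\delta)\log2-H(d_s-\delta/2,\ d_x-d_s+\delta/2,\ 1-d_x)$, attained by $P_{Z^\star Y^\star}(z,y)=\frac{\delta+d_x-1}{\delta+4d_x-2d_s-2}$ if $z=y$, $\frac{d_x-d_s-\delta/2}{\delta+4d_x-2d_s-2}$ if $y=e$, $0$ otherwise, together with $P_{X|Z^\star Y^\star}(x|z,y)=1-d_x$ for $(x|z,y)\in\{(0|0,0),(1|1,1),(e|0,e),(e|1,e)\}$; $d_s-\delta/2$ for $(x|z,y)\in\{(1|0,0),(0|1,1),(1|0,e),(0|1,e)\}$; $d_x-d_s+\delta/2$ for $(x|z,y)\in\{(e|0,0),(e|1,1),(0|0,e),(1|1,e)\}$; $0$ otherwise; (v) if $(d_s,d_x)\in\mathcal D_5$, $R(d_s,d_x)=0$. Here "attained by" means the displayed joint distribution of $(X,Z^\star,Y^\star)$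 has $X$-marginal $P_X$ and its conditional $P_{Z^\star Y^\star|X}$ is a minimizer in the definition of $R(d_s,d_x)$.
   Context: Erased fair coin flips: $S$ is uniform on $\{0,1\}$, and $X\in\{0,1,e\}$ is the output of a binary erasure channel with erasure probability $\delta$ and input $S$ (so $X=S$ w.p. $1-\delta$, $X=e$ w.p. $\delta$). Reconstructions $Z\in\{0,1\}$ for $S$ and $Y\in\{0,1,e\}$ for $X$, with Hamming distortions $\mathsf d_s(s,z)=1\{s\ne z\}$, $\mathsf d_x(x,y)=1\{x\ne y\}$. Let $\bar{\mathsf d}_s(x,z)=\mathbb E[\mathsf d_s(S,z)\mid X=x]$. $R(d_s,d_x)=\min_{P_{ZY|X}}I(X;Z,Y)$ subject to $\mathbb E[\bar{\mathsf d}_s(X,Z)]\le d_s$ and $\mathbb E[\mathsf d_x(X,Y)]\le d_x$. $h(p)=-p\log p-(1-p)\log(1-p)$ is the binary entropy and $H(p_1,p_2,p_3)=-\sum_ip_i\log p_i$, with $0\log0=0$ and the same logarithm base as in the mutual information. *)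

theory Defs
  imports Complex_Main
begin

datatype zsym = Z0 | Z1

datatype xsym = X0 | X1 | Xe

lemma UNIV_zsym: "(UNIV :: zsym set) = {Z0, Z1}"
  using zsym.exhaust by auto

lemma UNIV_xsym: "(UNIV :: xsym set) = {X0, X1, Xe}"
  using xsym.exhaust by auto

instance zsym :: finite
  by standard (simp add: UNIV_zsym)

instance xsym :: finite
  by standard (simp add: UNIV_xsym)

fun emb :: "zsym \<Rightarrow> xsym" where
  "emb Z0 = X0" | "emb Z1 = X1"

definition PS :: "zsym \<Rightarrow> real" where
  "PS s = 1/2"

definition BEC :: "real \<Rightarrow> zsym \<Rightarrow> xsym \<Rightarrow> real" where
  "BEC \<delta> s x = (if x = Xe then \<delta> else if x = emb s then 1 - \<delta> else 0)"

definition PX :: "real \<Rightarrow> xsym \<Rightarrow> real" where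
  "PX \<delta> x = (\<Sum>s\<in>UNIV. PS s * BEC \<delta> s x)"

definition post :: "real \<Rightarrow> xsym \<Rightarrow> zsym \<Rightarrow> real" where
  "post \<delta> x s = PS s * BEC \<delta> s x / PX \<delta> x"

definition d_s :: "zsym \<Rightarrow> zsym \<Rightarrow> real" where
  "d_s s z = (if s = z then 0 else 1)"

definition d_x :: "xsym \<Rightarrow> xsym \<Rightarrow> real" where
  "d_x x y = (if x = y then 0 else 1)"

definition dsbar :: "real \<Rightarrow> xsym \<Rightarrow> zsym \<Rightarrow> real" where
  "dsbar \<delta> x z = (\<Sum>s\<in>UNIV. post \<delta> x s * d_s s z)"

text \<open>A test channel W x z y = P_{ZY|X}(z,y|x).\<close>
definition cond_pmf :: "(xsym \<Rightarrow> zsym \<Rightarrow> xsym \<Rightarrow> real) \<Rightarrow> bool" where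
  "cond_pmf W \<longleftrightarrow> (\<forall>x z y. 0 \<le> W x z y) \<and> (\<forall>x. (\<Sum>z\<in>UNIV. \<Sum>y\<in>UNIV. W x z y) = 1)"

definition mutual_info :: "real \<Rightarrow> real \<Rightarrow> (xsym \<Rightarrow> zsym \<Rightarrow> xsym \<Rightarrow> real) \<Rightarrow> real" where
  "mutual_info b \<delta> W =
     (\<Sum>x\<in>UNIV. \<Sum>z\<in>UNIV. \<Sum>y\<in>UNIV.
        (let p = PX \<delta> x * W x z y;
             q = (\<Sum>x'\<in>UNIV. PX \<delta> x' * W x' z y)
         in if p = 0 then 0 else p * log b (W x z y / q)))"

definition exp_ds :: "real \<Rightarrow> (xsym \<Rightarrow> zsym \<Rightarrow> xsym \<Rightarrow> real) \<Rightarrow> real" where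
  "exp_ds \<delta> W = (\<Sum>x\<in>UNIV. \<Sum>z\<in>UNIV. \<Sum>y\<in>UNIV. PX \<delta> x * W x z y * dsbar \<delta> x z)"

definition exp_dx :: "real \<Rightarrow> (xsym \<Rightarrow> zsym \<Rightarrow> xsym \<Rightarrow> real) \<Rightarrow> real" where
  "exp_dx \<delta> W = (\<Sum>x\<in>UNIV. \<Sum>z\<in>UNIV. \<Sum>y\<in>UNIV. PX \<delta> x * W x z y * d_x x y)"

definition feasible :: "real \<Rightarrow> real \<Rightarrow> real \<Rightarrow> (xsym \<Rightarrow> zsym \<Rightarrow> xsym \<Rightarrow> real) \<Rightarrow> bool" where
  "feasible \<delta> ds dx W \<longleftrightarrow> cond_pmf W \<and> exp_ds \<delta> W \<le> ds \<and> exp_dx \<delta> W \<le> dx"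

definition RD :: "real \<Rightarrow> real \<Rightarrow> real \<Rightarrow> real \<Rightarrow> real" where
  "RD b \<delta> ds dx = Inf {mutual_info b \<delta> W | W. feasible \<delta> ds dx W}"

definition attains :: "real \<Rightarrow> real \<Rightarrow> real \<Rightarrow> real \<Rightarrow> (xsym \<Rightarrow> zsym \<Rightarrow> xsym \<Rightarrow> real) \<Rightarrow> bool" where
  "attains b \<delta> ds dx J \<longleftrightarrow>
     (\<forall>x. (\<Sum>z\<in>UNIV. \<Sum>y\<in>UNIV. J x z y) = PX \<delta> x) \<and>
     feasible \<delta> ds dx (\<lambda>x z y. J x z y / PX \<delta> x) \<and>
     mutual_info b \<delta> (\<lambda>x z y. J x z y / PX \<delta> x) = RD b \<delta> ds dx"

definition plogp :: "real \<Rightarrow> real \<Rightarrow> real" where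
  "plogp b p = (if p = 0 then 0 else p * log b p)"

definition hb :: "real \<Rightarrow> real \<Rightarrow> real" where
  "hb b p = - plogp b p - plogp b (1 - p)"

definition H3 :: "real \<Rightarrow> real \<Rightarrow> real \<Rightarrow> real \<Rightarrow> real" where
  "H3 b p1 p2 p3 = - plogp b p1 - plogp b p2 - plogp b p3"

definition PY1 :: "real \<Rightarrow> real \<Rightarrow> xsym \<Rightarrow> real" where
  "PY1 \<delta> dx y = (if y = Xe then (2*\<delta> - dx) / (2 - 3*dx) else (1 - \<delta> - dx) / (2 - 3*dx))"
definition PXgY1 :: "real \<Rightarrow> xsym \<Rightarrow> xsym \<Rightarrow> real" where
  "PXgY1 dx x y = (if x = y then 1 - dx else dx / 2)"
definition PZgY1 :: "real \<Rightarrow> zsym \<Rightarrow> xsym \<Rightarrow> real" where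
  "PZgY1 \<theta> z y = (if y = emb z then 1
                   else if y = Xe \<and> z = Z0 then \<theta>
                   else if y = Xe \<and> z = Z1 then 1 - \<theta> else 0)"
definition J1 :: "real \<Rightarrow> real \<Rightarrow> real \<Rightarrow> xsym \<Rightarrow> zsym \<Rightarrow> xsym \<Rightarrow> real" where
  "J1 \<delta> dx \<theta> x z y = PY1 \<delta> dx y * PXgY1 dx x y * PZgY1 \<theta> z y"

definition PY2 :: "xsym \<Rightarrow> real" where
  "PY2 y = (if y = Xe then 0 else 1/2)"
definition PXgY2 :: "real \<Rightarrow> real \<Rightarrow> xsym \<Rightarrow> xsym \<Rightarrow> real" where
  "PXgY2 \<delta> dx x y = (if y = Xe then 0
                      else if x = y then 1 - dx
                      else if x = Xe then \<delta>
                      else dx - \<delta>)"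
definition J2 :: "real \<Rightarrow> real \<Rightarrow> xsym \<Rightarrow> zsym \<Rightarrow> xsym \<Rightarrow> real" where
  "J2 \<delta> dx x z y = PY2 y * PXgY2 \<delta> dx x y * (if y = emb z then 1 else 0)"

definition PXgZ3 :: "real \<Rightarrow> real \<Rightarrow> xsym \<Rightarrow> zsym \<Rightarrow> real" where
  "PXgZ3 \<delta> ds x z = (if x = emb z then 1 - ds - \<delta>/2
                      else if x = Xe then \<delta>
                      else ds - \<delta>/2)"
definition J3 :: "real \<Rightarrow> real \<Rightarrow> xsym \<Rightarrow> zsym \<Rightarrow> xsym \<Rightarrow> real" where
  "J3 \<delta> ds x z y = (1/2) * PXgZ3 \<delta> ds x z * (if y = emb z then 1 else 0)"

definition PZY4 :: "real \<Rightarrow> real \<Rightarrow> real \<Rightarrow> zsym \<Rightarrow> xsym \<Rightarrow> real" where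
  "PZY4 \<delta> ds dx z y =
     (if y = emb z then (\<delta> + dx - 1) / (\<delta> + 4*dx - 2*ds - 2)
      else if y = Xe then (dx - ds - \<delta>/2) / (\<delta> + 4*dx - 2*ds - 2)
      else 0)"
definition PXgZY4 :: "real \<Rightarrow> real \<Rightarrow> real \<Rightarrow> xsym \<Rightarrow> zsym \<Rightarrow> xsym \<Rightarrow> real" where
  "PXgZY4 \<delta> ds dx x z y =
     (if (x, z, y) \<in> {(X0, Z0, X0), (X1, Z1, X1), (Xe, Z0, Xe), (Xe, Z1, Xe)} then 1 - dx
      else if (x, z, y) \<in> {(X1, Z0, X0), (X0, Z1, X1), (X1, Z0, Xe), (X0, Z1, Xe)} then ds - \<delta>/2
      else if (x, z, y) \<in> {(Xe, Z0, X0), (Xe, Z1, X1), (X0, Z0, Xe), (X1, Z1, Xe)} then dx - ds + \<delta>/2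
      else 0)"
definition J4 :: "real \<Rightarrow> real \<Rightarrow> real \<Rightarrow> xsym \<Rightarrow> zsym \<Rightarrow> xsym \<Rightarrow> real" where
  "J4 \<delta> ds dx x z y = PZY4 \<delta> ds dx z y * PXgZY4 \<delta> ds dx x z y"

definition D1 :: "real \<Rightarrow> real \<Rightarrow> real \<Rightarrow> bool" where
  "D1 \<delta> ds dx \<longleftrightarrow> 0 \<le> dx \<and> dx \<le> 2*\<delta> \<and> ds \<ge> dx/2 + \<delta>/2"
definition D2 :: "real \<Rightarrow> real \<Rightarrow> real \<Rightarrow> bool" where
  "D2 \<delta> ds dx \<longleftrightarrow> 2*\<delta> \<le> dx \<and> dx \<le> 1/2 + \<delta>/2 \<and> ds \<ge> dx - \<delta>/2"
definition D3 :: "real \<Rightarrow> real \<Rightarrow> real \<Rightarrow> bool" where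
  "D3 \<delta> ds dx \<longleftrightarrow> dx \<ge> ds + \<delta>/2 \<and> \<delta>/2 \<le> ds \<and> ds \<le> 1/2"
definition D4 :: "real \<Rightarrow> real \<Rightarrow> real \<Rightarrow> bool" where
  "D4 \<delta> ds dx \<longleftrightarrow> 2*ds - \<delta> \<le> dx \<and> dx \<le> ds + \<delta>/2 \<and> \<delta>/2 \<le> ds \<and> ds \<le> 3*\<delta>/2"
definition D5 :: "real \<Rightarrow> real \<Rightarrow> real \<Rightarrow> bool" where
  "D5 \<delta> ds dx \<longleftrightarrow> dx \<ge> 1/2 + \<delta>/2 \<and> ds \<ge> 1/2"

end

theory Submission
  imports Defs "HOL-Real_Asymp.Real_Asymp"
begin

(* Every lower bound comes from one inequality: for any positive g(x,z,y) with
   sum_x g(x,z,y) <= 1, Gibbs' inequality gives I(X;Z,Y) >= E log (g(X,Z,Y) / P_X(X)).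
   Taking g(x,z,y) = w(x) a^(2 dbar_s(x,z)) beta^(d_x(x,y)) with a, beta <= 1, the distortion
   constraints turn this into I >= H(X) + E log w(X) + 2 d_s log a + d_x log beta.
   In each region the parameters are chosen so that g is the conditional law of X given the
   optimal reconstructions (Z',Y') under the displayed joint distribution.  For every (z,y)
   in its support that law is a permutation of one fixed triple (p1,p2,p3), so the bound
   equals H(X) - H3(p1,p2,p3) = I(X; Z',Y'), and the joint distribution attains it.
   On the lower edges of D1, D3 and D4 the optimal a or beta is 0; there the bound follows
   by approaching the edge from inside, since the feasible set grows with the distortion
   levels and the entropy expressions are continuous.  In D5 a constant reconstruction
   is feasible and I >= 0. *)

lemma sum_UNIV_xsym: "(\<Sum>x\<in>UNIV. f x) = f X0 + f X1 + f Xe"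
  by (simp add: UNIV_xsym add.assoc)

lemma sum_UNIV_zsym: "(\<Sum>z\<in>UNIV. f z) = f Z0 + f Z1"
  by (simp add: UNIV_zsym)

lemma PX_simps [simp]: "PX \<delta> X0 = (1 - \<delta>) / 2" "PX \<delta> X1 = (1 - \<delta>) / 2" "PX \<delta> Xe = \<delta>"
  unfolding PX_def sum_UNIV_zsym by (simp_all add: PS_def BEC_def)

lemma PX_pos: "0 < \<delta> \<Longrightarrow> \<delta> < 1 \<Longrightarrow> 0 < PX \<delta> x"
  by (cases x) simp_all

lemma sum_PX: "(\<Sum>x\<in>UNIV. PX \<delta> x) = 1"
  by (simp add: sum_UNIV_xsym)

lemma dsbar_simps [simp]:
  assumes "0 < \<delta>" "\<delta> < 1"
  shows "dsbar \<delta> X0 Z0 = 0" "dsbar \<delta> X0 Z1 = 1" "dsbar \<delta> X1 Z0 = 1" "dsbar \<delta> X1 Z1 = 0"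
    "dsbar \<delta> Xe z = 1/2"
  using assms by (cases z; simp add: dsbar_def post_def sum_UNIV_zsym PS_def BEC_def d_s_def)+

definition entropy_PX :: "real \<Rightarrow> real \<Rightarrow> real" where
  "entropy_PX b \<delta> = hb b \<delta> + (1 - \<delta>) * log b 2"

lemma plogp_eq: "plogp b x = x * log b x"
  by (simp add: plogp_def)

lemma plogp_mult:
  assumes "0 < c" "0 \<le> x"
  shows "plogp b (c * x) = c * plogp b x + c * x * log b c"
  using assms by (cases "x = 0") (simp_all add: plogp_def log_mult algebra_simps)

lemma sum_plogp_PX:
  assumes "0 < \<delta>" "\<delta> < 1"
  shows "(\<Sum>x\<in>UNIV. plogp b (PX \<delta> x)) = - entropy_PX b \<delta>"
proof -
  have "plogp b ((1 - \<delta>) / 2) = plogp b (1 - \<delta>) / 2 - (1 - \<delta>) / 2 * log b 2"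
    using plogp_mult[of "1/2" "1 - \<delta>" b] assms by (simp add: log_divide)
  then show ?thesis
    by (simp add: sum_UNIV_xsym entropy_PX_def hb_def)
qed

lemma hb_one_minus: "hb b (1 - p) = hb b p"
  by (simp add: hb_def)

lemma hb_half: "hb b (1/2) = log b 2"
  by (simp add: hb_def plogp_def log_divide)

lemma H3_grouping:
  assumes "0 \<le> p" "p \<le> 1" "0 \<le> t" "t \<le> 1"
  shows "H3 b p ((1 - p) * t) ((1 - p) * (1 - t)) = hb b p + (1 - p) * hb b t"
proof (cases "p = 1")
  case False
  then have "0 < 1 - p" using assms by simp
  with assms have "plogp b ((1 - p) * t) = (1 - p) * plogp b t + (1 - p) * t * log b (1 - p)"
    and "plogp b ((1 - p) * (1 - t)) = (1 - p) * plogp b (1 - t) + (1 - p) * (1 - t) * log b (1 - p)"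
    by (simp_all add: plogp_mult)
  then show ?thesis
    unfolding H3_def hb_def plogp_eq[of b "1 - p"] by (simp add: algebra_simps)
qed (simp add: H3_def hb_def plogp_def)

lemma entropy_PX_minus_H3_erasure:
  assumes "0 < \<delta>" "\<delta> < 1" "0 \<le> u" "u \<le> 1 - \<delta>"
  shows "entropy_PX b \<delta> - H3 b \<delta> u (1 - \<delta> - u) = (1 - \<delta>) * (log b 2 - hb b (u / (1 - \<delta>)))"
proof -
  have "(1 - \<delta>) * (u / (1 - \<delta>)) = u" "(1 - \<delta>) * (1 - u / (1 - \<delta>)) = 1 - \<delta> - u"
    using assms by (simp_all add: field_simps)
  moreover have "H3 b \<delta> ((1 - \<delta>) * (u / (1 - \<delta>))) ((1 - \<delta>) * (1 - u / (1 - \<delta>)))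
      = hb b \<delta> + (1 - \<delta>) * hb b (u / (1 - \<delta>))"
    using assms by (intro H3_grouping) simp_all
  ultimately show ?thesis
    by (simp add: entropy_PX_def algebra_simps)
qed

lemma continuous_on_plogp: "continuous_on {0..} (plogp b)"
  unfolding continuous_on_def plogp_eq
proof
  fix x :: real
  assume "x \<in> {0..}"
  show "((\<lambda>x. x * log b x) \<longlongrightarrow> x * log b x) (at x within {0..})"
  proof (cases "x = 0")
    case True
    have "((\<lambda>x::real. x * ln x) \<longlongrightarrow> 0) (at_right 0)"
      by real_asymp
    with True show ?thesis
      by (simp add: at_within_Ici_at_right log_def tendsto_divide_zero)
  next
    case False
    with \<open>x \<in> {0..}\<close> have "isCont (\<lambda>x. x * ln x * (1 / ln b)) x"
      by (intro continuous_intros) auto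
    then show ?thesis
      by (simp add: log_def isCont_def tendsto_within_subset[where S = UNIV])
  qed
qed

lemma tendsto_plogp:
  assumes "(f \<longlongrightarrow> l) F" "0 \<le> l" "\<forall>\<^sub>F x in F. 0 \<le> f x"
  shows "((\<lambda>x. plogp b (f x)) \<longlongrightarrow> plogp b l) F"
  using continuous_on_tendsto_compose[OF continuous_on_plogp assms(1)] assms(2,3) by simp

lemma tendsto_H3:
  assumes "(f \<longlongrightarrow> p) F" "(g \<longlongrightarrow> q) F" "(h \<longlongrightarrow> r) F" "0 \<le> p" "0 \<le> q" "0 \<le> r"
    "\<forall>\<^sub>F x in F. 0 \<le> f x \<and> 0 \<le> g x \<and> 0 \<le> h x"
  shows "((\<lambda>x. H3 b (f x) (g x) (h x)) \<longlongrightarrow> H3 b p q r) F"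
  unfolding H3_def using assms
  by (intro tendsto_intros tendsto_plogp) (auto elim: eventually_mono)

section \<open>The dual lower bound on the mutual information\<close>

lemma sum_swap3:
  "(\<Sum>x\<in>A. \<Sum>z\<in>B. \<Sum>y\<in>C. f x z y) = (\<Sum>z\<in>B. \<Sum>y\<in>C. \<Sum>x\<in>A. f x z y)"
  by (subst sum.swap) (rule sum.cong[OF refl], rule sum.swap)

lemma mult_log_div_ge:
  assumes "1 < b" "0 < p" "0 < r"
  shows "(p - r) / ln b \<le> p * log b (p / r)"
proof -
  have "ln (r / p) \<le> r / p - 1"
    using assms by (intro ln_le_minus_one) simp
  then have "p - r \<le> p * ln (p / r)"
    using assms by (simp add: ln_div field_simps)
  then show ?thesis
    using assms by (simp add: log_def divide_right_mono)
qed

lemma gibbs_term_ge: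
  assumes b: "1 < b" and "0 < c" "0 \<le> w" "c * w \<le> q" "0 < g"
  shows "c * w * log b (g / c) + (c * w - q * g) / ln b
    \<le> (if c * w = 0 then 0 else c * w * log b (w / q))"
proof (cases "c * w = 0")
  case True
  then show ?thesis
    using assms by (simp add: divide_nonpos_pos)
next
  case False
  with assms have "0 < c * w" "0 < w"
    by (auto simp: zero_less_mult_iff)
  with assms have "0 < q"
    by linarith
  then have "w / q = c * w / (q * g) * (g / c)"
    using assms by (simp add: field_simps)
  moreover have "log b (c * w / (q * g) * (g / c)) = log b (c * w / (q * g)) + log b (g / c)"
    using \<open>0 < c * w\<close> \<open>0 < q\<close> assms by (intro log_mult_pos) simp_all
  ultimately show ?thesis
    using mult_log_div_ge[OF b \<open>0 < c * w\<close>, of "q * g"] \<open>0 < q\<close> assms False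
    by (simp add: distrib_left)
qed

lemma mutual_info_ge_dual:
  assumes b: "1 < b" and \<delta>: "0 < \<delta>" "\<delta> < 1" and W: "cond_pmf W"
    and g_pos: "\<And>x z y. 0 < g x z y" and g_sum: "\<And>z y. (\<Sum>x\<in>UNIV. g x z y) \<le> 1"
  shows "(\<Sum>x\<in>UNIV. \<Sum>z\<in>UNIV. \<Sum>y\<in>UNIV. PX \<delta> x * W x z y * log b (g x z y / PX \<delta> x))
    \<le> mutual_info b \<delta> W"
proof -
  define p where "p x z y = PX \<delta> x * W x z y" for x z y
  define q where "q z y = (\<Sum>x\<in>UNIV. p x z y)" for z y
  have W_nonneg: "0 \<le> W x z y" for x z y
    using W by (simp add: cond_pmf_def)
  have p_nonneg: "0 \<le> p x z y" for x z y
    using PX_pos[OF \<delta>] W_nonneg by (simp add: p_def less_imp_le)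
  have p_le_q: "p x z y \<le> q z y" for x z y
    unfolding q_def by (rule member_le_sum) (simp_all add: p_nonneg)
  have q_nonneg: "0 \<le> q z y" for z y
    unfolding q_def by (intro sum_nonneg p_nonneg)
  have sum_p: "(\<Sum>x\<in>UNIV. \<Sum>z\<in>UNIV. \<Sum>y\<in>UNIV. p x z y) = 1"
    using W by (simp add: p_def cond_pmf_def sum_PX flip: sum_distrib_left)
  have sum_qg: "(\<Sum>x\<in>UNIV. \<Sum>z\<in>UNIV. \<Sum>y\<in>UNIV. q z y * g x z y) \<le> 1"
  proof -
    have "(\<Sum>x\<in>UNIV. \<Sum>z\<in>UNIV. \<Sum>y\<in>UNIV. q z y * g x z y)
        = (\<Sum>z\<in>UNIV. \<Sum>y\<in>UNIV. q z y * (\<Sum>x\<in>UNIV. g x z y))"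
      by (subst sum_swap3) (simp add: sum_distrib_left)
    also have "\<dots> \<le> (\<Sum>z\<in>UNIV. \<Sum>y\<in>UNIV. q z y)"
      using q_nonneg g_pos g_sum by (intro sum_mono mult_right_le_one_le sum_nonneg) (simp_all add: less_imp_le)
    also have "\<dots> = 1"
      using sum_p by (simp add: q_def sum_swap3[of p UNIV UNIV UNIV])
    finally show ?thesis .
  qed
  have term_ge: "p x z y * log b (g x z y / PX \<delta> x) + (p x z y - q z y * g x z y) / ln b
      \<le> (if p x z y = 0 then 0 else p x z y * log b (W x z y / q z y))" for x z y
    unfolding p_def
    by (rule gibbs_term_ge[OF b PX_pos[OF \<delta>] W_nonneg p_le_q[unfolded p_def] g_pos])
  have "(\<Sum>x\<in>UNIV. \<Sum>z\<in>UNIV. \<Sum>y\<in>UNIV. p x z y * log b (g x z y / PX \<delta> x))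
      \<le> (\<Sum>x\<in>UNIV. \<Sum>z\<in>UNIV. \<Sum>y\<in>UNIV. p x z y * log b (g x z y / PX \<delta> x)
           + (p x z y - q z y * g x z y) / ln b)"
    using sum_p sum_qg b
    by (simp add: sum.distrib sum_subtractf flip: sum_divide_distrib)
  also have "\<dots> \<le> mutual_info b \<delta> W"
    unfolding mutual_info_def Let_def p_def[symmetric] q_def
    by (intro sum_mono term_ge[unfolded q_def])
  finally show ?thesis
    by (simp add: p_def)
qed

lemma mutual_info_ge_dual_product:
  assumes b: "1 < b" and \<delta>: "0 < \<delta>" "\<delta> < 1" and W: "cond_pmf W"
    and wb: "0 < wb" and we: "0 < we" and a: "0 < a" "a \<le> 1" and \<beta>: "0 < \<beta>" "\<beta> \<le> 1"
    and C1: "wb * (1 + a\<^sup>2 * \<beta>) + we * a * \<beta> \<le> 1"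
    and C3: "wb * \<beta> * (1 + a\<^sup>2) + we * a \<le> 1"
  shows "entropy_PX b \<delta> + (1 - \<delta>) * log b wb + \<delta> * log b we
      + 2 * log b a * exp_ds \<delta> W + log b \<beta> * exp_dx \<delta> W \<le> mutual_info b \<delta> W"
proof -
  define w where "w x = (if x = Xe then we else wb)" for x
  define g where "g x z y = w x * a powr (2 * dsbar \<delta> x z) * \<beta> powr d_x x y" for x z y
  have g_pos: "0 < g x z y" for x z y
    using wb we a \<beta> by (simp add: g_def w_def)
  (* C1 and C3 are the constraints sum_x g <= 1 at (z,y) = (0,0) and (0,e); the one at
     (0,1) follows from C1, and z = 1 is symmetric. *)
  have C2: "wb * (\<beta> + a\<^sup>2) + we * a * \<beta> \<le> 1"
  proof -
    have "0 \<le> wb * (1 - \<beta>) * (1 - a\<^sup>2)"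
      using wb a \<beta> by (simp add: power_le_one)
    then show ?thesis
      using C1 by (simp add: algebra_simps)
  qed
  have g_sum: "(\<Sum>x\<in>UNIV. g x z y) \<le> 1" for z y
    using C1 C2 C3 a \<beta> \<delta>
    by (cases z; cases y) (simp_all add: sum_UNIV_xsym g_def w_def d_x_def powr_numeral algebra_simps)
  have log_g: "log b (g x z y / PX \<delta> x)
      = (log b (w x) - log b (PX \<delta> x)) + 2 * log b a * dsbar \<delta> x z + log b \<beta> * d_x x y" for x z y
    using wb we a \<beta> PX_pos[OF \<delta>, of x]
    by (simp add: g_def w_def log_divide_pos log_mult_pos log_powr)
  have sum_W: "(\<Sum>z\<in>UNIV. \<Sum>y\<in>UNIV. W x z y) = 1" for x
    using W by (simp add: cond_pmf_def)
  have dual: "(\<Sum>x\<in>UNIV. \<Sum>z\<in>UNIV. \<Sum>y\<in>UNIV. PX \<delta> x * W x z y * log b (g x z y / PX \<delta> x))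
      \<le> mutual_info b \<delta> W"
    by (rule mutual_info_ge_dual[OF b \<delta> W]) (simp_all add: g_pos g_sum)
  have "(\<Sum>x\<in>UNIV. \<Sum>z\<in>UNIV. \<Sum>y\<in>UNIV. PX \<delta> x * W x z y * log b (g x z y / PX \<delta> x))
      = (\<Sum>x\<in>UNIV. PX \<delta> x * (log b (w x) - log b (PX \<delta> x)) * (\<Sum>z\<in>UNIV. \<Sum>y\<in>UNIV. W x z y))
        + 2 * log b a * exp_ds \<delta> W + log b \<beta> * exp_dx \<delta> W"
    unfolding log_g exp_ds_def exp_dx_def
    by (simp add: distrib_left sum.distrib sum_distrib_left sum_distrib_right mult_ac)
  also have "\<dots> = entropy_PX b \<delta> + (1 - \<delta>) * log b wb + \<delta> * log b we
      + 2 * log b a * exp_ds \<delta> W + log b \<beta> * exp_dx \<delta> W"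
    using sum_plogp_PX[OF \<delta>, of b]
    unfolding sum_W by (simp add: sum_UNIV_xsym w_def plogp_eq algebra_simps)
  finally show ?thesis
    using dual by simp
qed

lemma mutual_info_ge_dual_params:
  assumes b: "1 < b" and \<delta>: "0 < \<delta>" "\<delta> < 1" and F: "feasible \<delta> ds dx W"
    and wb: "0 < wb" and we: "0 < we" and a: "0 < a" "a \<le> 1" and \<beta>: "0 < \<beta>" "\<beta> \<le> 1"
    and C1: "wb * (1 + a\<^sup>2 * \<beta>) + we * a * \<beta> \<le> 1"
    and C3: "wb * \<beta> * (1 + a\<^sup>2) + we * a \<le> 1"
  shows "entropy_PX b \<delta> + (1 - \<delta>) * log b wb + \<delta> * log b we + 2 * ds * log b a + dx * log b \<beta>
    \<le> mutual_info b \<delta> W"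
proof -
  have W: "cond_pmf W" and exp_ds: "exp_ds \<delta> W \<le> ds" and exp_dx: "exp_dx \<delta> W \<le> dx"
    using F by (simp_all add: feasible_def)
  have "2 * ds * log b a \<le> 2 * log b a * exp_ds \<delta> W"
    using mult_left_mono_neg[OF exp_ds, of "2 * log b a"] b a by (simp add: mult_ac)
  moreover have "dx * log b \<beta> \<le> log b \<beta> * exp_dx \<delta> W"
    using mult_left_mono_neg[OF exp_dx, of "log b \<beta>"] b \<beta> by (simp add: mult_ac)
  ultimately show ?thesis
    using mutual_info_ge_dual_product[OF b \<delta> W wb we a \<beta> C1 C3] by linarith
qed

lemma mutual_info_nonneg:
  assumes "1 < b" "0 < \<delta>" "\<delta> < 1" "cond_pmf W"
  shows "0 \<le> mutual_info b \<delta> W"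
  using mutual_info_ge_dual[OF assms, of "\<lambda>x z y. PX \<delta> x"] PX_pos[OF assms(2,3)]
  by (simp add: sum_PX less_imp_neq[symmetric])

section \<open>Converse bounds\<close>

lemma feasible_mono:
  "feasible \<delta> ds dx W \<Longrightarrow> ds \<le> ds' \<Longrightarrow> dx \<le> dx' \<Longrightarrow> feasible \<delta> ds' dx' W"
  by (auto simp: feasible_def)

lemma converse_D1_interior:
  assumes b: "1 < b" and \<delta>: "0 < \<delta>" "\<delta> < 1" and F: "feasible \<delta> ds dx W"
    and dx: "0 < dx" "dx \<le> 2/3"
  shows "entropy_PX b \<delta> - H3 b (1 - dx) (dx/2) (dx/2) \<le> mutual_info b \<delta> W"
proof -
  define \<beta> where "\<beta> = dx / 2 / (1 - dx)"
  have \<beta>: "0 < \<beta>" "\<beta> \<le> 1"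
    using dx by (simp_all add: \<beta>_def field_simps)
  have "entropy_PX b \<delta> + (1 - \<delta>) * log b (1 - dx) + \<delta> * log b (1 - dx) + 2 * ds * log b 1 + dx * log b \<beta>
      \<le> mutual_info b \<delta> W"
    using dx \<beta> by (intro mutual_info_ge_dual_params[OF b \<delta> F]) (simp_all add: \<beta>_def field_simps)
  moreover have "log b \<beta> = log b dx - log b 2 - log b (1 - dx)"
    using dx log_divide_pos[of "dx/2" "1 - dx" b] log_divide_pos[of dx 2 b] by (simp add: \<beta>_def)
  ultimately show ?thesis
    using dx by (simp add: H3_def plogp_eq log_divide_pos algebra_simps)
qed

lemma converse_D1:
  assumes b: "1 < b" and \<delta>: "0 < \<delta>" "\<delta> < 1" and F: "feasible \<delta> ds dx W"
    and dx: "0 \<le> dx" "dx < 2/3"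
  shows "entropy_PX b \<delta> - H3 b (1 - dx) (dx/2) (dx/2) \<le> mutual_info b \<delta> W"
proof (rule tendsto_upperbound)
  show "((\<lambda>t. entropy_PX b \<delta> - H3 b (1 - (dx + t)) ((dx + t)/2) ((dx + t)/2))
      \<longlongrightarrow> entropy_PX b \<delta> - H3 b (1 - dx) (dx/2) (dx/2)) (at_right 0)"
    using dx
    by (intro tendsto_intros tendsto_H3 tendsto_eq_intros) (auto simp: eventually_at_right_field intro!: exI[of _ "1 - dx"])
  have "entropy_PX b \<delta> - H3 b (1 - (dx + t)) ((dx + t)/2) ((dx + t)/2) \<le> mutual_info b \<delta> W"
    if "0 < t" "t < 2/3 - dx" for t
  proof -
    have "feasible \<delta> ds (dx + t) W"
      using F that by (auto intro: feasible_mono)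
    then show ?thesis
      using dx that by (intro converse_D1_interior[OF b \<delta>]) simp_all
  qed
  then show "\<forall>\<^sub>F t in at_right 0.
      entropy_PX b \<delta> - H3 b (1 - (dx + t)) ((dx + t)/2) ((dx + t)/2) \<le> mutual_info b \<delta> W"
    using dx by (auto simp: eventually_at_right_field intro!: exI[of _ "2/3 - dx"])
qed simp

lemma converse_D2:
  assumes b: "1 < b" and \<delta>: "0 < \<delta>" "\<delta> < 1" and F: "feasible \<delta> ds dx W"
    and dx: "2 * \<delta> \<le> dx" "dx \<le> 1/2 + \<delta>/2"
  shows "entropy_PX b \<delta> - H3 b \<delta> (dx - \<delta>) (1 - dx) \<le> mutual_info b \<delta> W"
proof -
  define u where "u = dx - \<delta>"
  define \<beta> where "\<beta> = u / (1 - dx)"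
  have u: "0 < u" "\<delta> \<le> u" "2 * u \<le> 1 - \<delta>" and "0 < 1 - dx"
    using \<delta> dx by (simp_all add: u_def)
  have \<beta>: "0 < \<beta>" "\<beta> \<le> 1"
    using u \<open>0 < 1 - dx\<close> by (simp_all add: \<beta>_def u_def field_simps)
  have \<beta>_u: "(1 - dx) * \<beta> = u"
    using \<open>0 < 1 - dx\<close> by (simp add: \<beta>_def)
  have C3: "(1 - dx) * \<beta> * (1 + 1\<^sup>2) + \<delta> / \<beta> * 1 \<le> 1"
  proof -
    have "0 \<le> (u - \<delta>) * (1 - \<delta> - 2 * u)"
      using u by simp
    then have "\<delta> * (1 - dx) \<le> u * (1 - 2 * u)"
      by (simp add: u_def algebra_simps)
    then have "\<delta> * (1 - dx) / u \<le> 1 - 2 * u"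
      using u by (simp add: pos_divide_le_eq mult.commute)
    moreover have "\<delta> / \<beta> = \<delta> * (1 - dx) / u"
      using \<open>0 < 1 - dx\<close> by (simp add: \<beta>_def)
    ultimately show ?thesis
      using \<beta>_u by simp
  qed
  have C1: "(1 - dx) * (1 + 1\<^sup>2 * \<beta>) + \<delta> / \<beta> * 1 * \<beta> \<le> 1"
  proof -
    have "(1 - dx) * (1 + 1\<^sup>2 * \<beta>) + \<delta> / \<beta> * 1 * \<beta> = (1 - dx) + (1 - dx) * \<beta> + \<delta>"
      using \<beta> by (simp add: algebra_simps)
    then show ?thesis
      using \<beta>_u by (simp add: u_def)
  qed
  have "entropy_PX b \<delta> + (1 - \<delta>) * log b (1 - dx) + \<delta> * log b (\<delta> / \<beta>) + 2 * ds * log b 1 + dx * log b \<beta>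
      \<le> mutual_info b \<delta> W"
    using \<delta> \<beta> \<open>0 < 1 - dx\<close> by (intro mutual_info_ge_dual_params[OF b \<delta> F _ _ _ _ _ _ C1 C3]) simp_all
  moreover have "log b \<beta> = log b u - log b (1 - dx)"
    using u \<open>0 < 1 - dx\<close> by (simp add: \<beta>_def log_divide_pos)
  moreover have "log b (\<delta> / \<beta>) = log b \<delta> - log b \<beta>"
    using \<delta> \<beta> by (simp add: log_divide_pos)
  ultimately show ?thesis
    using \<delta> u \<open>0 < 1 - dx\<close> by (simp add: H3_def plogp_eq u_def algebra_simps)
qed

lemma converse_D3_interior:
  assumes b: "1 < b" and \<delta>: "0 < \<delta>" "\<delta> < 1" and F: "feasible \<delta> ds dx W"
    and ds: "\<delta>/2 < ds" "ds \<le> 1/2"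
  shows "entropy_PX b \<delta> - H3 b \<delta> (ds - \<delta>/2) (1 - ds - \<delta>/2) \<le> mutual_info b \<delta> W"
proof -
  define p1 where "p1 = ds - \<delta>/2"
  define p3 where "p3 = 1 - ds - \<delta>/2"
  define a where "a = sqrt (p1 / p3)"
  have p: "0 < p1" "p1 \<le> p3" "0 < p3"
    using \<delta> ds by (simp_all add: p1_def p3_def)
  have a: "0 < a" "a \<le> 1" "a\<^sup>2 = p1 / p3"
    using p by (simp_all add: a_def)
  have "entropy_PX b \<delta> + (1 - \<delta>) * log b p3 + \<delta> * log b (\<delta> / a) + 2 * ds * log b a + dx * log b 1
      \<le> mutual_info b \<delta> W"
    using \<delta> a p
    by (intro mutual_info_ge_dual_params[OF b \<delta> F]) (simp_all add: p1_def p3_def field_simps)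
  moreover have "(1 - \<delta>) * log b p3 + \<delta> * log b (\<delta> / a) + 2 * ds * log b a = - H3 b \<delta> p1 p3"
  proof -
    have "2 * log b a = log b p1 - log b p3"
      using a p log_nat_power[of a b 2] by (simp add: log_divide_pos)
    moreover have "log b (\<delta> / a) = log b \<delta> - log b a"
      using \<delta> a by (simp add: log_divide_pos)
    moreover have "2 * ds - \<delta> = 2 * p1" "1 - \<delta> = p1 + p3"
      by (simp_all add: p1_def p3_def)
    ultimately show ?thesis
      unfolding H3_def plogp_eq by algebra
  qed
  ultimately show ?thesis
    by (simp add: p1_def p3_def)
qed

lemma converse_D3:
  assumes b: "1 < b" and \<delta>: "0 < \<delta>" "\<delta> < 1" and F: "feasible \<delta> ds dx W"
    and ds: "\<delta>/2 \<le> ds" "ds \<le> 1/2"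
  shows "entropy_PX b \<delta> - H3 b \<delta> (ds - \<delta>/2) (1 - ds - \<delta>/2) \<le> mutual_info b \<delta> W"
proof (cases "ds = \<delta>/2")
  case True
  show ?thesis
  proof (rule tendsto_upperbound)
    have "((\<lambda>t. entropy_PX b \<delta> - H3 b \<delta> t (1 - \<delta> - t))
        \<longlongrightarrow> entropy_PX b \<delta> - H3 b \<delta> 0 (1 - \<delta> - 0)) (at_right 0)"
      using \<delta> by (intro tendsto_intros tendsto_H3) (auto simp: eventually_at_right_field intro!: exI[of _ "1 - \<delta>"])
    moreover have "ds - \<delta>/2 = 0" "1 - ds - \<delta>/2 = 1 - \<delta> - 0"
      using True by simp_all
    ultimately show "((\<lambda>t. entropy_PX b \<delta> - H3 b \<delta> t (1 - \<delta> - t))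
        \<longlongrightarrow> entropy_PX b \<delta> - H3 b \<delta> (ds - \<delta>/2) (1 - ds - \<delta>/2)) (at_right 0)"
      by (simp only:)
    have "entropy_PX b \<delta> - H3 b \<delta> t (1 - \<delta> - t) \<le> mutual_info b \<delta> W"
      if "0 < t" "t < (1 - \<delta>)/2" for t
    proof -
      have "feasible \<delta> (\<delta>/2 + t) dx W"
        using F True that by (auto intro: feasible_mono)
      from converse_D3_interior[OF b \<delta> this] that show ?thesis
        by (simp add: algebra_simps)
    qed
    then show "\<forall>\<^sub>F t in at_right 0. entropy_PX b \<delta> - H3 b \<delta> t (1 - \<delta> - t) \<le> mutual_info b \<delta> W"
      using \<delta> by (auto simp: eventually_at_right_field intro!: exI[of _ "(1 - \<delta>)/2"])
  qed simp
next
  case False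
  with ds have "\<delta>/2 < ds"
    by simp
  with ds show ?thesis
    by (intro converse_D3_interior[OF b \<delta> F])
qed

lemma converse_D4_interior:
  assumes b: "1 < b" and \<delta>: "0 < \<delta>" "\<delta> < 1" and F: "feasible \<delta> ds dx W"
    and p: "0 < ds - \<delta>/2" "ds - \<delta>/2 \<le> dx - ds + \<delta>/2" "dx - ds + \<delta>/2 \<le> 1 - dx" "0 < 1 - dx"
  shows "entropy_PX b \<delta> - H3 b (ds - \<delta>/2) (dx - ds + \<delta>/2) (1 - dx) \<le> mutual_info b \<delta> W"
proof -
  define p1 where "p1 = ds - \<delta>/2"
  define p2 where "p2 = dx - ds + \<delta>/2"
  define p3 where "p3 = 1 - dx"
  define a where "a = sqrt (p1 / p2)"
  have p: "0 < p1" "p1 \<le> p2" "p2 \<le> p3" "0 < p3" "0 < p2" "p1 + p2 + p3 = 1"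
    using p by (simp_all add: p1_def p2_def p3_def)
  have a: "0 < a" "a \<le> 1" "a\<^sup>2 = p1 / p2"
    using p by (simp_all add: a_def)
  have "p3 * (1 + a\<^sup>2 * (p2 / p3)) + p3 / a * a * (p2 / p3) = p1 + p2 + p3"
    and "p3 * (p2 / p3) * (1 + a\<^sup>2) + p3 / a * a = p1 + p2 + p3"
    using a p(1-5) by (simp_all add: field_simps)
  then have "entropy_PX b \<delta> + (1 - \<delta>) * log b p3 + \<delta> * log b (p3 / a) + 2 * ds * log b a + dx * log b (p2 / p3)
      \<le> mutual_info b \<delta> W"
    using a p by (intro mutual_info_ge_dual_params[OF b \<delta> F]) simp_all
  moreover have "(1 - \<delta>) * log b p3 + \<delta> * log b (p3 / a) + 2 * ds * log b a + dx * log b (p2 / p3)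
      = - H3 b p1 p2 p3"
  proof -
    have "2 * log b a = log b p1 - log b p2"
      using a p log_nat_power[of a b 2] by (simp add: log_divide_pos)
    moreover have "log b (p3 / a) = log b p3 - log b a" "log b (p2 / p3) = log b p2 - log b p3"
      using a p by (simp_all add: log_divide_pos)
    moreover have "2 * ds - \<delta> = 2 * p1" "dx = p1 + p2" "1 - dx = p3"
      by (simp_all add: p1_def p2_def p3_def)
    ultimately show ?thesis
      unfolding H3_def plogp_eq by algebra
  qed
  ultimately show ?thesis
    by (simp add: p1_def p2_def p3_def)
qed

lemma converse_D4:
  assumes b: "1 < b" and \<delta>: "0 < \<delta>" "\<delta> < 1" and F: "feasible \<delta> ds dx W"
    and p: "0 \<le> ds - \<delta>/2" "ds - \<delta>/2 \<le> dx - ds + \<delta>/2" "dx - ds + \<delta>/2 < 1 - dx"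
  shows "entropy_PX b \<delta> - H3 b (ds - \<delta>/2) (dx - ds + \<delta>/2) (1 - dx) \<le> mutual_info b \<delta> W"
proof (rule tendsto_upperbound)
  (* Along (ds + t, dx + 2 t) the triple becomes (p1 + t, p2 + t, p3 - 2 t), which lies in
     the interior case for small t > 0. *)
  let ?R = "\<lambda>t. entropy_PX b \<delta> - H3 b (ds + t - \<delta>/2) (dx + 2 * t - (ds + t) + \<delta>/2) (1 - (dx + 2 * t))"
  have "(?R \<longlongrightarrow> ?R 0) (at_right 0)"
    using p by (intro tendsto_intros tendsto_H3)
      (auto simp: eventually_at_right_field intro!: exI[of _ "(1 - dx)/2"])
  then show "(?R \<longlongrightarrow> entropy_PX b \<delta> - H3 b (ds - \<delta>/2) (dx - ds + \<delta>/2) (1 - dx)) (at_right 0)"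
    by simp
  have "?R t \<le> mutual_info b \<delta> W" if "0 < t" "t < (1 - 2 * dx + ds - \<delta>/2) / 3" for t
  proof -
    have "feasible \<delta> (ds + t) (dx + 2 * t) W"
      using F that by (auto intro: feasible_mono)
    then show ?thesis
      using p that by (intro converse_D4_interior[OF b \<delta>]) simp_all
  qed
  then show "\<forall>\<^sub>F t in at_right 0. ?R t \<le> mutual_info b \<delta> W"
    using p by (auto simp: eventually_at_right_field intro!: exI[of _ "(1 - 2 * dx + ds - \<delta>/2) / 3"])
qed simp

section \<open>Achievability and the five regions\<close>

lemma mutual_info_of_joint:
  assumes \<delta>: "0 < \<delta>" "\<delta> < 1"
    and J: "\<And>x z y. J x z y = P z y * K x z y"
    and P: "\<And>z y. 0 \<le> P z y" and K: "\<And>x z y. 0 \<le> K x z y"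
    and K_sum: "\<And>z y. P z y \<noteq> 0 \<Longrightarrow> (\<Sum>x\<in>UNIV. K x z y) = 1"
    and K_entropy: "\<And>z y. P z y \<noteq> 0 \<Longrightarrow> (\<Sum>x\<in>UNIV. plogp b (K x z y)) = - c"
    and marg: "\<And>x. (\<Sum>z\<in>UNIV. \<Sum>y\<in>UNIV. J x z y) = PX \<delta> x"
  shows "mutual_info b \<delta> (\<lambda>x z y. J x z y / PX \<delta> x) = entropy_PX b \<delta> - c"
proof -
  have PX_nz: "PX \<delta> x \<noteq> 0" for x
    using PX_pos[OF \<delta>] by (simp add: less_imp_neq[symmetric])
  have sum_J: "(\<Sum>x\<in>UNIV. J x z y) = P z y" for z y
    using K_sum[of z y] by (cases "P z y = 0") (simp_all add: J flip: sum_distrib_left)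
  have sum_P: "(\<Sum>z\<in>UNIV. \<Sum>y\<in>UNIV. P z y) = 1"
    using sum_swap3[of J UNIV UNIV UNIV] by (simp add: sum_J marg sum_PX)
  have "(let p = PX \<delta> x * (J x z y / PX \<delta> x); q = \<Sum>x'\<in>UNIV. PX \<delta> x' * (J x' z y / PX \<delta> x')
         in if p = 0 then 0 else p * log b (J x z y / PX \<delta> x / q))
      = (if J x z y = 0 then 0 else J x z y * log b (J x z y / PX \<delta> x / P z y))" for x z y
    by (simp add: PX_nz sum_J Let_def)
  also have "\<dots> x z y = P z y * plogp b (K x z y) - J x z y * log b (PX \<delta> x)" for x z y
  proof (cases "J x z y = 0")
    case False
    then have "0 < P z y" "0 < K x z y"
      using P[of z y] K[of x z y] by (simp_all add: J less_le)
    then have "J x z y / PX \<delta> x / P z y = K x z y / PX \<delta> x"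
      by (simp add: J)
    moreover have "log b (K x z y / PX \<delta> x) = log b (K x z y) - log b (PX \<delta> x)"
      using \<open>0 < K x z y\<close> PX_pos[OF \<delta>, of x] by (rule log_divide_pos)
    ultimately show ?thesis
      using False by (simp add: J plogp_eq right_diff_distrib mult.assoc)
  qed (auto simp: J plogp_def)
  finally have "mutual_info b \<delta> (\<lambda>x z y. J x z y / PX \<delta> x)
      = (\<Sum>x\<in>UNIV. \<Sum>z\<in>UNIV. \<Sum>y\<in>UNIV. P z y * plogp b (K x z y))
        - (\<Sum>x\<in>UNIV. \<Sum>z\<in>UNIV. \<Sum>y\<in>UNIV. J x z y * log b (PX \<delta> x))"
    by (simp add: mutual_info_def sum_subtractf)
  also have "(\<Sum>x\<in>UNIV. \<Sum>z\<in>UNIV. \<Sum>y\<in>UNIV. P z y * plogp b (K x z y)) = - c"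
  proof -
    have "P z y * (\<Sum>x\<in>UNIV. plogp b (K x z y)) = P z y * - c" for z y
      using K_entropy[of z y] by (cases "P z y = 0") simp_all
    then have "(\<Sum>x\<in>UNIV. \<Sum>z\<in>UNIV. \<Sum>y\<in>UNIV. P z y * plogp b (K x z y))
        = (\<Sum>z\<in>UNIV. \<Sum>y\<in>UNIV. P z y * - c)"
      by (subst sum_swap3) (simp add: sum_distrib_left)
    also have "\<dots> = - c"
      using sum_P by (simp add: sum_negf flip: sum_distrib_right)
    finally show ?thesis .
  qed
  also have "(\<Sum>x\<in>UNIV. \<Sum>z\<in>UNIV. \<Sum>y\<in>UNIV. J x z y * log b (PX \<delta> x)) = - entropy_PX b \<delta>"
    using sum_plogp_PX[OF \<delta>, of b] by (simp add: marg plogp_eq flip: sum_distrib_right)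
  finally show ?thesis
    by simp
qed

lemma RD_eq_attains:
  assumes \<delta>: "0 < \<delta>" "\<delta> < 1"
    and J: "\<And>x z y. 0 \<le> J x z y" and marg: "\<And>x. (\<Sum>z\<in>UNIV. \<Sum>y\<in>UNIV. J x z y) = PX \<delta> x"
    and ds: "(\<Sum>x\<in>UNIV. \<Sum>z\<in>UNIV. \<Sum>y\<in>UNIV. J x z y * dsbar \<delta> x z) \<le> ds"
    and dx: "(\<Sum>x\<in>UNIV. \<Sum>z\<in>UNIV. \<Sum>y\<in>UNIV. J x z y * d_x x y) \<le> dx"
    and MI: "mutual_info b \<delta> (\<lambda>x z y. J x z y / PX \<delta> x) = T"
    and converse: "\<And>W. feasible \<delta> ds dx W \<Longrightarrow> T \<le> mutual_info b \<delta> W"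
  shows "RD b \<delta> ds dx = T \<and> attains b \<delta> ds dx J"
proof -
  have PX_nz: "PX \<delta> x \<noteq> 0" for x
    using PX_pos[OF \<delta>] by (simp add: less_imp_neq[symmetric])
  have "feasible \<delta> ds dx (\<lambda>x z y. J x z y / PX \<delta> x)"
    using J PX_pos[OF \<delta>] marg ds dx
    by (simp add: feasible_def cond_pmf_def exp_ds_def exp_dx_def PX_nz less_imp_le flip: sum_divide_distrib)
  moreover from this have "T \<in> {mutual_info b \<delta> W | W. feasible \<delta> ds dx W}"
    using MI by blast
  then have "RD b \<delta> ds dx = T"
    unfolding RD_def by (rule cInf_eq_minimum) (auto intro: converse)
  ultimately show ?thesis
    using marg MI by (simp add: attains_def)
qed

lemma J1_sums:
  assumes "0 < \<delta>" "\<delta> < 1" "2 - 3 * dx \<noteq> 0"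
  shows "(\<Sum>z\<in>UNIV. \<Sum>y\<in>UNIV. J1 \<delta> dx \<theta> x z y) = PX \<delta> x"
    and "(\<Sum>x\<in>UNIV. \<Sum>z\<in>UNIV. \<Sum>y\<in>UNIV. J1 \<delta> dx \<theta> x z y * dsbar \<delta> x z) = dx/2 + \<delta>/2"
    and "(\<Sum>x\<in>UNIV. \<Sum>z\<in>UNIV. \<Sum>y\<in>UNIV. J1 \<delta> dx \<theta> x z y * d_x x y) = dx"
proof -
  define A where "A = (1 - \<delta> - dx) / (2 - 3 * dx)"
  define B where "B = (2 * \<delta> - dx) / (2 - 3 * dx)"
  have PY1_eq: "PY1 \<delta> dx y = (if y = Xe then B else A)" for y
    by (simp add: PY1_def A_def B_def)
  have "2 * A + B = (2 * (1 - \<delta> - dx) + (2 * \<delta> - dx)) / (2 - 3 * dx)"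
    by (simp only: A_def B_def add_divide_distrib times_divide_eq_right)
  then have AB: "2 * A + B = 1" "A * (2 - 3 * dx) = 1 - \<delta> - dx"
    using assms(3) by (simp_all add: A_def)
  have "(\<Sum>z\<in>UNIV. \<Sum>y\<in>UNIV. J1 \<delta> dx \<theta> X0 z y) = PX \<delta> X0"
    and "(\<Sum>z\<in>UNIV. \<Sum>y\<in>UNIV. J1 \<delta> dx \<theta> X1 z y) = PX \<delta> X1"
    and "(\<Sum>z\<in>UNIV. \<Sum>y\<in>UNIV. J1 \<delta> dx \<theta> Xe z y) = PX \<delta> Xe"
    using AB by (simp_all add: sum_UNIV_xsym sum_UNIV_zsym J1_def PY1_eq PXgY1_def PZgY1_def) algebra+
  then show "(\<Sum>z\<in>UNIV. \<Sum>y\<in>UNIV. J1 \<delta> dx \<theta> x z y) = PX \<delta> x"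
    by (cases x) simp_all
  show "(\<Sum>x\<in>UNIV. \<Sum>z\<in>UNIV. \<Sum>y\<in>UNIV. J1 \<delta> dx \<theta> x z y * dsbar \<delta> x z) = dx/2 + \<delta>/2"
    using AB
    by (simp add: sum_UNIV_xsym sum_UNIV_zsym J1_def PY1_eq PXgY1_def PZgY1_def
        dsbar_simps[OF assms(1,2)]) (simp add: field_simps)
  show "(\<Sum>x\<in>UNIV. \<Sum>z\<in>UNIV. \<Sum>y\<in>UNIV. J1 \<delta> dx \<theta> x z y * d_x x y) = dx"
    using AB by (simp add: sum_UNIV_xsym sum_UNIV_zsym J1_def PY1_eq PXgY1_def PZgY1_def d_x_def) algebra
qed

lemma RD_D1:
  assumes b: "1 < b" and \<delta>: "0 < \<delta>" "\<delta> < 1/3" and D: "D1 \<delta> ds dx"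
    and \<theta>: "0 \<le> \<theta>" "\<theta> \<le> 1"
  shows "RD b \<delta> ds dx = hb b \<delta> + (1 - \<delta>) * log b 2 - hb b dx - dx * log b 2
    \<and> attains b \<delta> ds dx (J1 \<delta> dx \<theta>)"
proof -
  have "\<delta> < 1"
    using \<delta> by simp
  have dx: "0 \<le> dx" "dx \<le> 2 * \<delta>" "dx/2 + \<delta>/2 \<le> ds" and "2 - 3 * dx \<noteq> 0"
    using D \<delta> by (simp_all add: D1_def)
  have "H3 b (1 - dx) ((1 - (1 - dx)) * (1/2)) ((1 - (1 - dx)) * (1 - 1/2))
      = hb b (1 - dx) + (1 - (1 - dx)) * hb b (1/2)"
    using dx \<delta> by (intro H3_grouping) simp_all
  then have R_eq: "hb b \<delta> + (1 - \<delta>) * log b 2 - hb b dx - dx * log b 2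
      = entropy_PX b \<delta> - H3 b (1 - dx) (dx/2) (dx/2)"
    by (simp add: entropy_PX_def hb_one_minus hb_half)
  have J_nonneg: "0 \<le> J1 \<delta> dx \<theta> x z y" for x z y
    using dx \<delta> \<theta> by (simp add: J1_def PY1_def PXgY1_def PZgY1_def)
  note marg = J1_sums(1)[OF \<open>0 < \<delta>\<close> \<open>\<delta> < 1\<close> \<open>2 - 3 * dx \<noteq> 0\<close>]
  show ?thesis
    unfolding R_eq
  proof (rule RD_eq_attains[OF \<open>0 < \<delta>\<close> \<open>\<delta> < 1\<close> J_nonneg marg])
    show "(\<Sum>x\<in>UNIV. \<Sum>z\<in>UNIV. \<Sum>y\<in>UNIV. J1 \<delta> dx \<theta> x z y * dsbar \<delta> x z) \<le> ds"
      and "(\<Sum>x\<in>UNIV. \<Sum>z\<in>UNIV. \<Sum>y\<in>UNIV. J1 \<delta> dx \<theta> x z y * d_x x y) \<le> dx"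
      using J1_sums(2,3)[OF \<open>0 < \<delta>\<close> \<open>\<delta> < 1\<close> \<open>2 - 3 * dx \<noteq> 0\<close>] dx by simp_all
    show "mutual_info b \<delta> (\<lambda>x z y. J1 \<delta> dx \<theta> x z y / PX \<delta> x)
        = entropy_PX b \<delta> - H3 b (1 - dx) (dx/2) (dx/2)"
    proof (rule mutual_info_of_joint[OF \<open>0 < \<delta>\<close> \<open>\<delta> < 1\<close> _ _ _ _ _ marg,
          where P = "\<lambda>z y. PY1 \<delta> dx y * PZgY1 \<theta> z y" and K = "\<lambda>x z y. PXgY1 dx x y"])
      show "0 \<le> PY1 \<delta> dx y * PZgY1 \<theta> z y" for z y
        using dx \<delta> \<theta> by (simp add: PY1_def PZgY1_def)
      show "0 \<le> PXgY1 dx x y" for x y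
        using dx \<delta> by (simp add: PXgY1_def)
      show "(\<Sum>x\<in>UNIV. PXgY1 dx x y) = 1" for y
        by (cases y) (simp_all add: sum_UNIV_xsym PXgY1_def)
      show "(\<Sum>x\<in>UNIV. plogp b (PXgY1 dx x y)) = - H3 b (1 - dx) (dx/2) (dx/2)" for y
        by (cases y) (simp_all add: sum_UNIV_xsym PXgY1_def H3_def)
    qed (simp add: J1_def)
    show "entropy_PX b \<delta> - H3 b (1 - dx) (dx/2) (dx/2) \<le> mutual_info b \<delta> W"
      if "feasible \<delta> ds dx W" for W
      using converse_D1[OF b \<open>0 < \<delta>\<close> \<open>\<delta> < 1\<close> that] dx \<delta> by simp
  qed
qed

lemma RD_D2:
  assumes b: "1 < b" and \<delta>: "0 < \<delta>" "\<delta> < 1" and D: "D2 \<delta> ds dx"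
  shows "RD b \<delta> ds dx = (1 - \<delta>) * (log b 2 - hb b ((dx - \<delta>) / (1 - \<delta>)))
    \<and> attains b \<delta> ds dx (J2 \<delta> dx)"
proof -
  have dx: "2 * \<delta> \<le> dx" "dx \<le> 1/2 + \<delta>/2" "dx - \<delta>/2 \<le> ds"
    using D by (simp_all add: D2_def)
  have R_eq: "(1 - \<delta>) * (log b 2 - hb b ((dx - \<delta>) / (1 - \<delta>)))
      = entropy_PX b \<delta> - H3 b \<delta> (dx - \<delta>) (1 - dx)"
    using entropy_PX_minus_H3_erasure[OF \<delta>, of "dx - \<delta>" b] \<delta> dx by simp
  have J_nonneg: "0 \<le> J2 \<delta> dx x z y" for x z y
    using \<delta> dx by (simp add: J2_def PY2_def PXgY2_def)
  have marg: "(\<Sum>z\<in>UNIV. \<Sum>y\<in>UNIV. J2 \<delta> dx x z y) = PX \<delta> x" for x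
    by (cases x) (simp_all add: sum_UNIV_xsym sum_UNIV_zsym J2_def PY2_def PXgY2_def field_simps)
  show ?thesis
    unfolding R_eq
  proof (rule RD_eq_attains[OF \<delta> J_nonneg marg])
    show "(\<Sum>x\<in>UNIV. \<Sum>z\<in>UNIV. \<Sum>y\<in>UNIV. J2 \<delta> dx x z y * dsbar \<delta> x z) \<le> ds"
      using \<delta> dx by (simp add: sum_UNIV_xsym sum_UNIV_zsym J2_def PY2_def PXgY2_def field_simps)
    show "(\<Sum>x\<in>UNIV. \<Sum>z\<in>UNIV. \<Sum>y\<in>UNIV. J2 \<delta> dx x z y * d_x x y) \<le> dx"
      by (simp add: sum_UNIV_xsym sum_UNIV_zsym J2_def PY2_def PXgY2_def d_x_def field_simps)
    show "mutual_info b \<delta> (\<lambda>x z y. J2 \<delta> dx x z y / PX \<delta> x)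
        = entropy_PX b \<delta> - H3 b \<delta> (dx - \<delta>) (1 - dx)"
    proof (rule mutual_info_of_joint[OF \<delta> _ _ _ _ _ marg, where P = "\<lambda>z y. PY2 y * (if y = emb z then 1 else 0)"
          and K = "\<lambda>x z y. PXgY2 \<delta> dx x y"])
      show "0 \<le> PXgY2 \<delta> dx x y" for x y
        using \<delta> dx by (simp add: PXgY2_def)
      show "(\<Sum>x\<in>UNIV. PXgY2 \<delta> dx x y) = 1"
        and "(\<Sum>x\<in>UNIV. plogp b (PXgY2 \<delta> dx x y)) = - H3 b \<delta> (dx - \<delta>) (1 - dx)"
        if "PY2 y * (if y = emb z then 1 else 0) \<noteq> 0" for z y
        using that by (cases z; cases y; simp add: sum_UNIV_xsym PY2_def PXgY2_def H3_def)+
    qed (simp_all add: J2_def PY2_def)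
    show "entropy_PX b \<delta> - H3 b \<delta> (dx - \<delta>) (1 - dx) \<le> mutual_info b \<delta> W"
      if "feasible \<delta> ds dx W" for W
      using converse_D2[OF b \<delta> that] dx by simp
  qed
qed

lemma RD_D3:
  assumes b: "1 < b" and \<delta>: "0 < \<delta>" "\<delta> < 1" and D: "D3 \<delta> ds dx"
  shows "RD b \<delta> ds dx = (1 - \<delta>) * (log b 2 - hb b ((ds - \<delta>/2) / (1 - \<delta>)))
    \<and> attains b \<delta> ds dx (J3 \<delta> ds)"
proof -
  have ds: "\<delta>/2 \<le> ds" "ds \<le> 1/2" "ds + \<delta>/2 \<le> dx"
    using D by (simp_all add: D3_def)
  have R_eq: "(1 - \<delta>) * (log b 2 - hb b ((ds - \<delta>/2) / (1 - \<delta>)))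
      = entropy_PX b \<delta> - H3 b \<delta> (ds - \<delta>/2) (1 - ds - \<delta>/2)"
    using entropy_PX_minus_H3_erasure[OF \<delta>, of "ds - \<delta>/2" b] ds by simp
  have J_nonneg: "0 \<le> J3 \<delta> ds x z y" for x z y
    using \<delta> ds by (simp add: J3_def PXgZ3_def)
  have marg: "(\<Sum>z\<in>UNIV. \<Sum>y\<in>UNIV. J3 \<delta> ds x z y) = PX \<delta> x" for x
    by (cases x) (simp_all add: sum_UNIV_xsym sum_UNIV_zsym J3_def PXgZ3_def field_simps)
  show ?thesis
    unfolding R_eq
  proof (rule RD_eq_attains[OF \<delta> J_nonneg marg])
    show "(\<Sum>x\<in>UNIV. \<Sum>z\<in>UNIV. \<Sum>y\<in>UNIV. J3 \<delta> ds x z y * dsbar \<delta> x z) \<le> ds"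
      using \<delta> by (simp add: sum_UNIV_xsym sum_UNIV_zsym J3_def PXgZ3_def field_simps)
    show "(\<Sum>x\<in>UNIV. \<Sum>z\<in>UNIV. \<Sum>y\<in>UNIV. J3 \<delta> ds x z y * d_x x y) \<le> dx"
      using ds by (simp add: sum_UNIV_xsym sum_UNIV_zsym J3_def PXgZ3_def d_x_def field_simps)
    show "mutual_info b \<delta> (\<lambda>x z y. J3 \<delta> ds x z y / PX \<delta> x)
        = entropy_PX b \<delta> - H3 b \<delta> (ds - \<delta>/2) (1 - ds - \<delta>/2)"
    proof (rule mutual_info_of_joint[OF \<delta> _ _ _ _ _ marg, where P = "\<lambda>z y. 1/2 * (if y = emb z then 1 else 0)"
          and K = "\<lambda>x z y. PXgZ3 \<delta> ds x z"])
      show "0 \<le> PXgZ3 \<delta> ds x z" for x z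
        using \<delta> ds by (simp add: PXgZ3_def)
      show "(\<Sum>x\<in>UNIV. PXgZ3 \<delta> ds x z) = 1" for z
        by (cases z) (simp_all add: sum_UNIV_xsym PXgZ3_def)
      show "(\<Sum>x\<in>UNIV. plogp b (PXgZ3 \<delta> ds x z)) = - H3 b \<delta> (ds - \<delta>/2) (1 - ds - \<delta>/2)" for z
        by (cases z) (simp_all add: sum_UNIV_xsym PXgZ3_def H3_def)
    qed (simp_all add: J3_def marg)
    show "entropy_PX b \<delta> - H3 b \<delta> (ds - \<delta>/2) (1 - ds - \<delta>/2) \<le> mutual_info b \<delta> W"
      if "feasible \<delta> ds dx W" for W
      using converse_D3[OF b \<delta> that] ds by simp
  qed
qed

lemma J4_sums:
  assumes "0 < \<delta>" "\<delta> < 1" "\<delta> + 4 * dx - 2 * ds - 2 \<noteq> 0"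
  shows "(\<Sum>z\<in>UNIV. \<Sum>y\<in>UNIV. J4 \<delta> ds dx x z y) = PX \<delta> x"
    and "(\<Sum>x\<in>UNIV. \<Sum>z\<in>UNIV. \<Sum>y\<in>UNIV. J4 \<delta> ds dx x z y * dsbar \<delta> x z) = ds"
    and "(\<Sum>x\<in>UNIV. \<Sum>z\<in>UNIV. \<Sum>y\<in>UNIV. J4 \<delta> ds dx x z y * d_x x y) = dx"
proof -
  define den where "den = \<delta> + 4 * dx - 2 * ds - 2"
  define A where "A = (\<delta> + dx - 1) / den"
  define B where "B = (dx - ds - \<delta>/2) / den"
  have AB: "A * den = \<delta> + dx - 1" "B * den = dx - ds - \<delta>/2"
    using assms(3) by (simp_all add: A_def B_def den_def)
  have "(2 * A + 2 * B) * den = 1 * den"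
    using AB by (simp add: den_def algebra_simps)
  then have "2 * A + 2 * B = 1"
    using assms(3) by (simp add: den_def)
  have PZY4_eq: "PZY4 \<delta> ds dx z y = (if y = emb z then A else if y = Xe then B else 0)" for z y
    by (simp add: PZY4_def A_def B_def den_def)
  have "(\<Sum>z\<in>UNIV. \<Sum>y\<in>UNIV. J4 \<delta> ds dx X0 z y) = PX \<delta> X0"
    and "(\<Sum>z\<in>UNIV. \<Sum>y\<in>UNIV. J4 \<delta> ds dx X1 z y) = PX \<delta> X1"
    and "(\<Sum>z\<in>UNIV. \<Sum>y\<in>UNIV. J4 \<delta> ds dx Xe z y) = PX \<delta> Xe"
    using AB \<open>2 * A + 2 * B = 1\<close>
    by (simp_all add: sum_UNIV_xsym sum_UNIV_zsym J4_def PZY4_eq PXgZY4_def den_def field_simps) algebra+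
  then show "(\<Sum>z\<in>UNIV. \<Sum>y\<in>UNIV. J4 \<delta> ds dx x z y) = PX \<delta> x"
    by (cases x) simp_all
  show "(\<Sum>x\<in>UNIV. \<Sum>z\<in>UNIV. \<Sum>y\<in>UNIV. J4 \<delta> ds dx x z y * dsbar \<delta> x z) = ds"
    and "(\<Sum>x\<in>UNIV. \<Sum>z\<in>UNIV. \<Sum>y\<in>UNIV. J4 \<delta> ds dx x z y * d_x x y) = dx"
    using AB \<open>2 * A + 2 * B = 1\<close>
    by (simp_all add: sum_UNIV_xsym sum_UNIV_zsym J4_def PZY4_eq PXgZY4_def den_def d_x_def
        dsbar_simps[OF assms(1,2)] field_simps) algebra+
qed

lemma RD_D4:
  assumes b: "1 < b" and \<delta>: "0 < \<delta>" "\<delta> < 1/3" and D: "D4 \<delta> ds dx"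
  shows "RD b \<delta> ds dx = hb b \<delta> + (1 - \<delta>) * log b 2 - H3 b (ds - \<delta>/2) (dx - ds + \<delta>/2) (1 - dx)
    \<and> attains b \<delta> ds dx (J4 \<delta> ds dx)"
proof -
  have "\<delta> < 1"
    using \<delta> by simp
  have d: "2 * ds - \<delta> \<le> dx" "dx \<le> ds + \<delta>/2" "\<delta>/2 \<le> ds" "ds \<le> 3 * \<delta> / 2"
    using D by (simp_all add: D4_def)
  have "\<delta> + 4 * dx - 2 * ds - 2 < 0"
    using d \<delta> by simp
  then have P_nonneg: "0 \<le> PZY4 \<delta> ds dx z y" for z y
    using d \<delta> by (simp add: PZY4_def divide_nonpos_neg)
  have K_nonneg: "0 \<le> PXgZY4 \<delta> ds dx x z y" for x z y
    using d \<delta> by (simp add: PXgZY4_def)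
  have J_nonneg: "0 \<le> J4 \<delta> ds dx x z y" for x z y
    using P_nonneg[of z y] K_nonneg[of x z y] by (simp add: J4_def)
  note sums = J4_sums[OF \<open>0 < \<delta>\<close> \<open>\<delta> < 1\<close> less_imp_neq[OF \<open>\<delta> + 4 * dx - 2 * ds - 2 < 0\<close>]]
  show ?thesis
    unfolding entropy_PX_def[symmetric]
  proof (rule RD_eq_attains[OF \<open>0 < \<delta>\<close> \<open>\<delta> < 1\<close> J_nonneg sums(1)])
    show "mutual_info b \<delta> (\<lambda>x z y. J4 \<delta> ds dx x z y / PX \<delta> x)
        = entropy_PX b \<delta> - H3 b (ds - \<delta>/2) (dx - ds + \<delta>/2) (1 - dx)"
    proof (rule mutual_info_of_joint[OF \<open>0 < \<delta>\<close> \<open>\<delta> < 1\<close> _ P_nonneg K_nonneg _ _ sums(1)])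
      show "(\<Sum>x\<in>UNIV. PXgZY4 \<delta> ds dx x z y) = 1"
        and "(\<Sum>x\<in>UNIV. plogp b (PXgZY4 \<delta> ds dx x z y)) = - H3 b (ds - \<delta>/2) (dx - ds + \<delta>/2) (1 - dx)"
        if "PZY4 \<delta> ds dx z y \<noteq> 0" for z y
        using that by (cases z; cases y; simp add: PZY4_def sum_UNIV_xsym PXgZY4_def H3_def)+
    qed (simp add: J4_def)
    show "entropy_PX b \<delta> - H3 b (ds - \<delta>/2) (dx - ds + \<delta>/2) (1 - dx) \<le> mutual_info b \<delta> W"
      if "feasible \<delta> ds dx W" for W
      using converse_D4[OF b \<open>0 < \<delta>\<close> \<open>\<delta> < 1\<close> that] d \<delta> by simp
  qed (simp_all add: sums(2,3))
qed

lemma RD_D5: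
  assumes b: "1 < b" and \<delta>: "0 < \<delta>" "\<delta> < 1" and D: "D5 \<delta> ds dx"
  shows "RD b \<delta> ds dx = 0"
proof -
  define P where "P z y = (if z = Z0 \<and> y = X0 then 1 else 0 :: real)" for z y
  define J where "J x z y = P z y * PX \<delta> x" for x z y
  have "RD b \<delta> ds dx = 0 \<and> attains b \<delta> ds dx J"
  proof (rule RD_eq_attains[OF \<delta>])
    show "0 \<le> J x z y" for x z y
      using PX_pos[OF \<delta>, of x] by (simp add: J_def P_def)
    show "(\<Sum>z\<in>UNIV. \<Sum>y\<in>UNIV. J x z y) = PX \<delta> x" for x
      by (simp add: sum_UNIV_xsym sum_UNIV_zsym J_def P_def)
    show "(\<Sum>x\<in>UNIV. \<Sum>z\<in>UNIV. \<Sum>y\<in>UNIV. J x z y * dsbar \<delta> x z) \<le> ds"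
      using D \<delta> by (simp add: sum_UNIV_xsym sum_UNIV_zsym J_def P_def D5_def field_simps)
    show "(\<Sum>x\<in>UNIV. \<Sum>z\<in>UNIV. \<Sum>y\<in>UNIV. J x z y * d_x x y) \<le> dx"
      using D by (simp add: sum_UNIV_xsym sum_UNIV_zsym J_def P_def D5_def d_x_def field_simps)
    have "mutual_info b \<delta> (\<lambda>x z y. J x z y / PX \<delta> x) = entropy_PX b \<delta> - entropy_PX b \<delta>"
      using PX_pos[OF \<delta>] sum_plogp_PX[OF \<delta>]
      by (intro mutual_info_of_joint[OF \<delta> J_def])
        (simp_all add: P_def sum_PX J_def sum_UNIV_xsym sum_UNIV_zsym less_imp_le)
    then show "mutual_info b \<delta> (\<lambda>x z y. J x z y / PX \<delta> x) = 0"
      by simp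
    show "0 \<le> mutual_info b \<delta> W" if "feasible \<delta> ds dx W" for W
      using mutual_info_nonneg[OF b \<delta>] that by (simp add: feasible_def)
  qed
  then show ?thesis ..
qed

theorem theorem5:
  fixes b \<delta> ds dx :: real
  assumes "b > 1"
    and "0 < \<delta>" and "\<delta> < 1/3"
    and "ds \<ge> \<delta>/2" and "dx \<ge> 0"
  shows
    "(D1 \<delta> ds dx \<longrightarrow>
        RD b \<delta> ds dx = hb b \<delta> + (1 - \<delta>) * log b 2 - hb b dx - dx * log b 2 \<and>
        (\<forall>\<theta>. 0 \<le> \<theta> \<and> \<theta> \<le> 1 \<longrightarrow> attains b \<delta> ds dx (J1 \<delta> dx \<theta>))) \<and>
     (D2 \<delta> ds dx \<longrightarrow>
        RD b \<delta> ds dx = (1 - \<delta>) * (log b 2 - hb b ((dx - \<delta>) / (1 - \<delta>))) \<and>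
        attains b \<delta> ds dx (J2 \<delta> dx)) \<and>
     (D3 \<delta> ds dx \<longrightarrow>
        RD b \<delta> ds dx = (1 - \<delta>) * (log b 2 - hb b ((ds - \<delta>/2) / (1 - \<delta>))) \<and>
        attains b \<delta> ds dx (J3 \<delta> ds)) \<and>
     (D4 \<delta> ds dx \<longrightarrow>
        RD b \<delta> ds dx = hb b \<delta> + (1 - \<delta>) * log b 2
                        - H3 b (ds - \<delta>/2) (dx - ds + \<delta>/2) (1 - dx) \<and>
        attains b \<delta> ds dx (J4 \<delta> ds dx)) \<and>
     (D5 \<delta> ds dx \<longrightarrow> RD b \<delta> ds dx = 0)"
proof -
  have "\<delta> < 1"
    using assms by simp
  then show ?thesis
    using RD_D1[OF assms(1-3)] RD_D1[OF assms(1-3), of ds dx 0] RD_D2[OF assms(1,2)]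
      RD_D3[OF assms(1,2)] RD_D4[OF assms(1-3)] RD_D5[OF assms(1,2)]
    by auto
qed

end
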